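(* Let $(X,d)$ be a compact metric space, $\Omega\subset X$ a nonempty open set, $\ell\in\mathcal C(\Omega)$ with $\inf_\Omega\ell>0$, and $g\in\mathcal C(\partial\Omega)$. Then the problem "$s[u](x)=\ell(x)$ for all $x\in\Omega$, $u(x)=g(x)$ for all $x\in\partial\Omega$" admits at most one continuous pointwise solution $u:\overline\Omega\to\mathbb{R}$, and if such a solution exists it is given for $x\in\Omega$ by \[ u(x)=\inf\Big\{\int_0^T\ell(\gamma(s))\,ds+g(\gamma(T)) : T>0,\ \gamma\in\mathrm{Lip}_1([0,T],\overline\Omega),\ \gamma(0)=x,\ \gamma(T)\in\partial\Omega,\ \gamma([0,T))\subset\Omega\Big\}. \]
   Context: $\mathcal C(A)$ denotes real-valued continuous functions on $A$; $\mathrm{Lip}_1([0,T],Y)$ the $1$-Lipschitz curves $[0,T]\to Y$. Local slope: $s[u](\bar x):=\limsup_{x\to\bar x}\frac{\max\{u(\bar x)-u(x),0\}}{d(\bar x,x)}$ (zero if $\bar x$ is isolated). A continuous pointwise solution is a continuous $u:\overline\Omega\to\mathbb{R}$ with $s[u](x)=\ell(x)$ for every $x\in\Omega$ (slope computed in $\overline\Omega$) and $u=g$ on $\partial\Omega$. Convention $\inf\emptyset=+\infty$. *)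

theory Defs
  imports "HOL-Analysis.Analysis"
begin

definition local_slope :: "'a::metric_space set \<Rightarrow> ('a \<Rightarrow> real) \<Rightarrow> 'a \<Rightarrow> ereal" where
  "local_slope A u xb =
     (if xb islimpt A
      then Limsup (at xb within A) (\<lambda>x. ereal (max (u xb - u x) 0 / dist xb x))
      else 0)"

definition cont_pointwise_solution ::
  "'a::metric_space set \<Rightarrow> ('a \<Rightarrow> real) \<Rightarrow> ('a \<Rightarrow> real) \<Rightarrow> ('a \<Rightarrow> real) \<Rightarrow> bool" where
  "cont_pointwise_solution \<Omega> l g u \<longleftrightarrow>
     continuous_on (closure \<Omega>) u \<and>
     (\<forall>x\<in>\<Omega>. local_slope (closure \<Omega>) u x = ereal (l x)) \<and>
     (\<forall>x\<in>frontier \<Omega>. u x = g x)"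

definition admissible_curves :: "'a::metric_space set \<Rightarrow> 'a \<Rightarrow> (real \<times> (real \<Rightarrow> 'a)) set" where
  "admissible_curves \<Omega> x = {(T, \<gamma>). T > 0 \<and> 1-lipschitz_on {0..T} \<gamma> \<and>
       \<gamma> ` {0..T} \<subseteq> closure \<Omega> \<and> \<gamma> 0 = x \<and> \<gamma> T \<in> frontier \<Omega> \<and> \<gamma> ` {0..<T} \<subseteq> \<Omega>}"

definition curve_cost :: "('a \<Rightarrow> real) \<Rightarrow> ('a \<Rightarrow> real) \<Rightarrow> real \<Rightarrow> (real \<Rightarrow> 'a) \<Rightarrow> ereal" where
  "curve_cost l g T \<gamma> =
     enn2ereal (\<integral>\<^sup>+ s. ennreal (l (\<gamma> s)) * indicator {0..T} s \<partial>lborel) + ereal (g (\<gamma> T))"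

end

theory Submission
  imports Defs
begin

(*
  Since s[u] <= l, u cannot decrease along a 1-Lipschitz curve faster than the running cost, so a
  continuous induction gives u(gamma 0) <= int_0^t l(gamma) + u(gamma t); letting t tend to the exit
  time shows that u(x) is at most the cost of every admissible curve.

  Since s[u] >= l, from every point of Omega there are arbitrarily short jumps along which u drops
  at a rate close to l. Greedily chaining nearly longest such jumps of length < r gives a chain of
  bounded length (u is bounded below and l >= c > 0) converging to a boundary point; parametrised
  by arc length it is 1-Lipschitz up to an error r, and its running cost is at most the drop of u.
  As r -> 0 these paths have a uniformly convergent subsequence (compactness of X and a diagonal
  argument), whose limit, stopped at its first boundary point, is an admissible curve of cost at
  most u(x) + epsilon. Uniqueness follows because the boundary values are prescribed.
*)

section \<open>Continuous induction and integrals on intervals\<close>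

lemma continuous_on_Icc_right_end_in_closed:
  fixes h :: "real \<Rightarrow> 'a::topological_space"
  assumes "a < b" "continuous_on {a..b} h" "closed S" "h ` {a..<b} \<subseteq> S"
  shows "h b \<in> S"
proof -
  have "h ` closure {a..<b} \<subseteq> S"
    by (rule image_closure_subset) (use assms in auto)
  then show ?thesis using \<open>a < b\<close> by (simp add: image_subset_iff)
qed

lemma continuous_induct_right:
  fixes \<psi> :: "real \<Rightarrow> real"
  assumes "a \<le> b" and cont: "continuous_on {a..b} \<psi>" and start: "0 \<le> \<psi> a"
    and step: "\<And>m. m \<in> {a..<b} \<Longrightarrow> 0 \<le> \<psi> m \<Longrightarrow> \<exists>h>0. \<forall>s. m < s \<and> s \<le> m + h \<and> s \<le> b \<longrightarrow> 0 \<le> \<psi> s"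
  shows "\<forall>t\<in>{a..b}. 0 \<le> \<psi> t"
proof -
  define S where "S = {t\<in>{a..b}. \<forall>s\<in>{a..t}. 0 \<le> \<psi> s}"
  have "a \<in> S" using start \<open>a \<le> b\<close> by (auto simp: S_def)
  have bdd: "bdd_above S" unfolding S_def by (rule bdd_aboveI[of _ b]) auto
  define m where "m = Sup S"
  have m: "a \<le> m" "m \<le> b"
    using \<open>a \<in> S\<close> bdd unfolding m_def by (auto intro!: cSup_upper cSup_least simp: S_def)
  have below: "0 \<le> \<psi> s" if "a \<le> s" "s < m" for s
  proof -
    obtain t where "t \<in> S" "s < t" using \<open>s < m\<close> \<open>a \<in> S\<close> bdd unfolding m_def by (metis empty_iff less_cSup_iff)
    then show ?thesis using that by (auto simp: S_def)
  qed
  have "0 \<le> \<psi> m"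
  proof (cases "a < m")
    case True
    have "continuous_on {a..m} \<psi>" using m by (intro continuous_on_subset[OF cont]) auto
    moreover have "\<psi> ` {a..<m} \<subseteq> {0..}" using below by (simp add: image_subset_iff)
    ultimately have "\<psi> m \<in> {0..}" using True by (intro continuous_on_Icc_right_end_in_closed) auto
    then show ?thesis by simp
  qed (use start m in auto)
  then have "m \<in> S" using below m by (fastforce simp: S_def)
  have "m = b"
  proof (rule ccontr)
    assume "m \<noteq> b"
    then have "m \<in> {a..<b}" using m by auto
    from step[OF this \<open>0 \<le> \<psi> m\<close>] obtain h where "h > 0" "\<And>s. m < s \<Longrightarrow> s \<le> m + h \<Longrightarrow> s \<le> b \<Longrightarrow> 0 \<le> \<psi> s"
      by auto
    then have "min (m + h) b \<in> S" using \<open>m \<in> S\<close> \<open>m \<in> {a..<b}\<close> by (auto simp: S_def not_le)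
    then have "min (m + h) b \<le> m" unfolding m_def using bdd by (rule cSup_upper)
    then show False using \<open>h > 0\<close> \<open>m \<in> {a..<b}\<close> by auto
  qed
  then show ?thesis using \<open>m \<in> S\<close> by (auto simp: S_def)
qed

lemma nn_integral_indicator_eq_integral:
  fixes f :: "real \<Rightarrow> real"
  assumes "continuous_on {a..b} f" "\<And>s. s \<in> {a..b} \<Longrightarrow> 0 \<le> f s"
  shows "(\<integral>\<^sup>+ s. ennreal (f s) * indicator {a..b} s \<partial>lborel) = ennreal (integral {a..b} f)"
proof -
  have "(f has_integral integral {a..b} f) {a..b}"
    using integrable_continuous_interval[OF assms(1)] by (simp add: integrable_integral)
  have "(\<integral>\<^sup>+ s. ennreal (f s) * indicator {a..b} s \<partial>lborel) = (\<integral>\<^sup>+ s. ennreal (indicator {a..b} s * f s) \<partial>lborel)"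
    by (intro nn_integral_cong) (simp add: indicator_def)
  also have "\<dots> = ennreal (integral {a..b} f)"
    by (rule nn_integral_has_integral_lebesgue[OF assms(2) \<open>(f has_integral _) _\<close>])
  finally show ?thesis .
qed

lemma borel_measurable_indicator_Icc_continuous:
  fixes f :: "real \<Rightarrow> real"
  assumes "continuous_on {a..b} f"
  shows "(\<lambda>s. ennreal (f s) * indicator {a..b} s) \<in> borel_measurable lborel"
proof -
  have "(\<lambda>s. indicator {a..b} s *\<^sub>R f s) \<in> borel_measurable borel"
    using assms by (intro borel_measurable_continuous_on_indicator) simp
  then have "(\<lambda>s. ennreal (indicator {a..b} s *\<^sub>R f s)) \<in> borel_measurable borel"
    by (rule measurable_compose[OF _ measurable_ennreal])
  moreover have "(\<lambda>s. ennreal (indicator {a..b} s *\<^sub>R f s)) = (\<lambda>s. ennreal (f s) * indicator {a..b} s)"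
    by (auto simp: indicator_def fun_eq_iff)
  ultimately show ?thesis by simp
qed

lemma SUP_indicator_Icc_left_approx:
  fixes T s :: real and c :: ennreal
  assumes "0 < T"
  shows "(SUP n. c * indicator {0..T - T / real (n + 2)} s) = c * indicator {0..<T} s"
proof -
  have pos: "0 < T / real (n + 2)" for n using \<open>0 < T\<close> by simp
  show ?thesis
  proof (cases "s \<in> {0..<T}")
    case True
    obtain N :: nat where "T / (T - s) < real N" using reals_Archimedean2 by blast
    then have "T / real (N + 2) < T - s"
      using True by (simp add: field_simps)
    then have "s \<in> {0..T - T / real (N + 2)}" using True by simp
    then have attained: "c * indicator {0..<T} s = c * indicator {0..T - T / real (N + 2)} s"
      using True by simp
    have le: "c * indicator {0..T - T / real (n + 2)} s \<le> c * indicator {0..<T} s" for n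
      using pos[of n] by (intro mult_left_mono indicator_leI) auto
    show ?thesis
    proof (rule antisym)
      show "(SUP n. c * indicator {0..T - T / real (n + 2)} s) \<le> c * indicator {0..<T} s"
        by (rule SUP_least) (rule le)
      show "c * indicator {0..<T} s \<le> (SUP n. c * indicator {0..T - T / real (n + 2)} s)"
        unfolding attained by (rule SUP_upper) simp
    qed
  next
    case False
    then have "s \<notin> {0..T - T / real (n + 2)}" for n
      using pos[of n] by auto
    then have zero: "c * indicator {0..T - T / real (n + 2)} s = 0" for n
      by simp
    show ?thesis using False unfolding zero by simp
  qed
qed

lemma nn_integral_Icc_eq_SUP_integral:
  fixes f :: "real \<Rightarrow> real"
  assumes "0 < T" and cont: "\<And>t. t \<in> {0..<T} \<Longrightarrow> continuous_on {0..t} f"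
    and nonneg: "\<And>s. s \<in> {0..<T} \<Longrightarrow> 0 \<le> f s"
  shows "(\<integral>\<^sup>+ s. ennreal (f s) * indicator {0..T} s \<partial>lborel) = (SUP t\<in>{0..<T}. ennreal (integral {0..t} f))"
proof (rule antisym)
  define a where "a n = T - T / real (n + 2)" for n :: nat
  have a: "a n \<in> {0..<T}" for n
    using \<open>0 < T\<close> by (simp add: a_def divide_le_eq)
  define F where "F n s = ennreal (f s) * indicator {0..a n} s" for n s
  have "a n \<le> a (Suc n)" for n
    using \<open>0 < T\<close> by (simp add: a_def frac_le)
  then have "incseq F"
    by (intro incseq_SucI le_funI) (auto simp: F_def indicator_def dest: order_trans)
  have SUP_F: "(SUP n. F n s) = ennreal (f s) * indicator {0..<T} s" for s
    unfolding F_def a_def by (rule SUP_indicator_Icc_left_approx[OF \<open>0 < T\<close>])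
  have "(\<integral>\<^sup>+ s. ennreal (f s) * indicator {0..T} s \<partial>lborel) = (\<integral>\<^sup>+ s. (SUP n. F n s) \<partial>lborel)"
    unfolding SUP_F using AE_lborel_singleton[of T]
    by (intro nn_integral_cong_AE) (auto elim!: eventually_mono simp: indicator_def)
  also have "\<dots> = (SUP n. integral\<^sup>N lborel (F n))"
  proof (rule nn_integral_monotone_convergence_SUP[OF \<open>incseq F\<close>])
    show "F n \<in> borel_measurable lborel" for n
      unfolding F_def using cont[OF a] by (rule borel_measurable_indicator_Icc_continuous)
  qed
  also have "\<dots> = (SUP n. ennreal (integral {0..a n} f))"
  proof (intro SUP_cong refl)
    fix n
    have "0 \<le> f s" if "s \<in> {0..a n}" for s
      using that a[of n] nonneg[of s] by auto
    then show "integral\<^sup>N lborel (F n) = ennreal (integral {0..a n} f)"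
      unfolding F_def by (intro nn_integral_indicator_eq_integral cont a)
  qed
  also have "\<dots> \<le> (SUP t\<in>{0..<T}. ennreal (integral {0..t} f))"
    using a by (intro SUP_least SUP_upper) auto
  finally show "(\<integral>\<^sup>+ s. ennreal (f s) * indicator {0..T} s \<partial>lborel) \<le> \<dots>" .
  have "ennreal (integral {0..t} f) \<le> (\<integral>\<^sup>+ s. ennreal (f s) * indicator {0..T} s \<partial>lborel)"
    if "t \<in> {0..<T}" for t
    using that cont nonneg
    by (subst nn_integral_indicator_eq_integral[symmetric])
       (auto intro!: nn_integral_mono simp: indicator_def)
  then show "(SUP t\<in>{0..<T}. ennreal (integral {0..t} f)) \<le> \<dots>"
    by (rule SUP_least)
qed

lemma nn_integral_Icc_le_of_integral_le:
  fixes f h :: "real \<Rightarrow> real"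
  assumes "0 < T" and cont: "\<And>t. t \<in> {0..<T} \<Longrightarrow> continuous_on {0..t} f"
    and nonneg: "\<And>s. s \<in> {0..<T} \<Longrightarrow> 0 \<le> f s"
    and "continuous_on {0..T} h" and bound: "\<And>t. t \<in> {0..<T} \<Longrightarrow> integral {0..t} f \<le> h t"
  shows "enn2ereal (\<integral>\<^sup>+ s. ennreal (f s) * indicator {0..T} s \<partial>lborel) \<le> ereal (h T)"
proof -
  have le_hT: "integral {0..t} f \<le> h T" if t: "t \<in> {0..<T}" for t
  proof -
    have "integral {0..t} f \<le> h s" if "s \<in> {t..<T}" for s
    proof -
      have "integral {0..t} f \<le> integral {0..s} f"
        using that t nonneg by (intro integral_subset_le integrable_continuous_interval cont) auto
      also have "\<dots> \<le> h s" using that t by (intro bound) auto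
      finally show ?thesis .
    qed
    then have "h ` {t..<T} \<subseteq> {integral {0..t} f..}" by auto
    moreover have "continuous_on {t..T} h"
      by (rule continuous_on_subset[OF \<open>continuous_on {0..T} h\<close>]) (use t in auto)
    ultimately have "h T \<in> {integral {0..t} f..}"
      using t by (intro continuous_on_Icc_right_end_in_closed) auto
    then show ?thesis by simp
  qed
  then have "(SUP t\<in>{0..<T}. ennreal (integral {0..t} f)) \<le> ennreal (h T)"
    by (auto intro!: SUP_least ennreal_leI)
  moreover have "0 \<le> h T"
    using le_hT[of 0] \<open>0 < T\<close> by simp
  ultimately show ?thesis
    using nn_integral_Icc_eq_SUP_integral[OF \<open>0 < T\<close> cont nonneg]
    by (metis enn2ereal_ennreal less_eq_ennreal.rep_eq)
qed

lemma le_nn_integral_Icc_of_le_integral: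
  fixes f h :: "real \<Rightarrow> real"
  assumes "0 < T" and cont: "\<And>t. t \<in> {0..<T} \<Longrightarrow> continuous_on {0..t} f"
    and nonneg: "\<And>s. s \<in> {0..<T} \<Longrightarrow> 0 \<le> f s"
    and "continuous_on {0..T} h" and bound: "\<And>t. t \<in> {0..<T} \<Longrightarrow> h t \<le> integral {0..t} f"
  shows "ereal (h T) \<le> enn2ereal (\<integral>\<^sup>+ s. ennreal (f s) * indicator {0..T} s \<partial>lborel)"
proof (cases "\<integral>\<^sup>+ s. ennreal (f s) * indicator {0..T} s \<partial>lborel" rule: ennreal_cases)
  case (real R)
  have "h t \<le> R" if "t \<in> {0..<T}" for t
  proof -
    have "ennreal (integral {0..t} f) \<le> (SUP t\<in>{0..<T}. ennreal (integral {0..t} f))"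
      using that by (rule SUP_upper)
    also have "\<dots> = ennreal R"
      using real(2) nn_integral_Icc_eq_SUP_integral[OF \<open>0 < T\<close> cont nonneg] by simp
    finally have "ennreal (integral {0..t} f) \<le> ennreal R" .
    then show ?thesis using bound[OF that] \<open>0 \<le> R\<close> by (simp add: ennreal_le_iff)
  qed
  then have "h T \<le> R"
    using continuous_on_Icc_right_end_in_closed[OF \<open>0 < T\<close> \<open>continuous_on {0..T} h\<close>, of "{..R}"]
    by (auto simp: image_subset_iff)
  then show ?thesis using real by (simp add: enn2ereal_ennreal)
qed simp

lemma integral_ge_near_left_end:
  fixes f :: "real \<Rightarrow> real"
  assumes cont: "continuous_on {a..b} f" and m: "m \<in> {a..b}" and "0 < \<epsilon>"
  obtains h where "0 < h" "\<And>s. m \<le> s \<Longrightarrow> s \<le> m + h \<Longrightarrow> s \<le> b \<Longrightarrow> (f m - \<epsilon>) * (s - m) \<le> integral {m..s} f"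
proof -
  obtain h where "0 < h" and h: "\<And>x. x \<in> {a..b} \<Longrightarrow> dist x m < h \<Longrightarrow> dist (f x) (f m) < \<epsilon>"
    using cont[unfolded continuous_on_iff, rule_format, OF m \<open>0 < \<epsilon>\<close>] by auto
  show thesis
  proof (rule that[of "h/2"])
    show "0 < h/2" using \<open>0 < h\<close> by simp
    fix s assume s: "m \<le> s" "s \<le> m + h/2" "s \<le> b"
    have "f m - \<epsilon> \<le> f x" if "x \<in> {m..s}" for x
    proof -
      have "x \<in> {a..b}" "dist x m < h" using that s m \<open>0 < h\<close> by (auto simp: dist_real_def)
      then have "dist (f x) (f m) < \<epsilon>" by (rule h)
      then show ?thesis using abs_less_iff[of "f x - f m" \<epsilon>] unfolding dist_real_def by linarith
    qed
    then have "integral {m..s} (\<lambda>_. f m - \<epsilon>) \<le> integral {m..s} f"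
      using s m by (intro integral_le integrable_continuous_interval continuous_on_subset[OF cont]) auto
    then show "(f m - \<epsilon>) * (s - m) \<le> integral {m..s} f" using s by (simp add: mult.commute)
  qed
qed

section \<open>Limits of almost 1-Lipschitz paths\<close>

lemma compact_UNIV_fun:
  assumes "compact (UNIV :: 'a::topological_space set)"
  shows "compact (UNIV :: ('i \<Rightarrow> 'a) set)"
proof -
  have "compact_space (euclidean :: 'a topology)"
    using assms by (simp add: compact_space_def compactin_euclidean_iff)
  then have "compact_space (product_topology (\<lambda>_::'i. euclidean :: 'a topology) UNIV)"
    by (simp add: compact_space_product_topology)
  then show ?thesis
    by (metis compact_space_def compactin_euclidean_iff euclidean_product_topology topspace_euclidean)
qed

text \<open>The diagonal argument, via Tychonoff: for countable \<open>'i\<close>, \<open>'i \<Rightarrow> 'a\<close> is a compact metric space.\<close>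

lemma subseq_pointwise_convergent:
  fixes F :: "nat \<Rightarrow> 'i::countable \<Rightarrow> 'a::metric_space"
  assumes "compact (UNIV :: 'a set)"
  obtains k where "strict_mono k" "\<And>i. convergent (\<lambda>n. F (k n) i)"
proof -
  have "seq_compact (UNIV :: ('i \<Rightarrow> 'a) set)"
    using compact_UNIV_fun[OF assms] by (rule compact_imp_seq_compact)
  then obtain k G where k: "strict_mono k" and lim: "(F \<circ> k) \<longlonglongrightarrow> G"
    unfolding seq_compact_def by blast
  have "(\<lambda>n. F (k n) i) \<longlonglongrightarrow> G i" for i
    using continuous_on_tendsto_compose[OF continuous_on_product_coordinates lim] by (simp add: o_def)
  then show thesis using that k by (auto simp: convergent_def)
qed

lemma uniform_limit_asymptotically_lipschitz:
  fixes G :: "nat \<Rightarrow> 'b::metric_space \<Rightarrow> 'a::metric_space"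
  assumes "compact S" and lim: "\<And>t. t \<in> S \<Longrightarrow> (\<lambda>n. G n t) \<longlonglongrightarrow> \<gamma> t" and \<rho>: "\<rho> \<longlonglongrightarrow> 0"
    and G_lip: "\<And>n s t. s \<in> S \<Longrightarrow> t \<in> S \<Longrightarrow> dist (G n s) (G n t) \<le> dist s t + \<rho> n"
    and \<gamma>_lip: "\<And>s t. s \<in> S \<Longrightarrow> t \<in> S \<Longrightarrow> dist (\<gamma> s) (\<gamma> t) \<le> dist s t"
  shows "uniform_limit S G \<gamma> sequentially"
  unfolding uniform_limit_iff
proof (intro allI impI)
  fix e :: real assume "0 < e"
  then have e4: "0 < e/4" by simp
  obtain N where N: "finite N" "N \<subseteq> S" "S \<subseteq> (\<Union>q\<in>N. ball q (e/4))"
    using seq_compact_imp_totally_bounded[OF compact_imp_seq_compact[OF \<open>compact S\<close>]] e4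
    by metis
  have "\<forall>\<^sub>F n in sequentially. \<forall>q\<in>N. dist (G n q) (\<gamma> q) < e/4"
    using N by (intro eventually_ball_finite ballI tendstoD[OF lim] e4) auto
  moreover have "\<forall>\<^sub>F n in sequentially. \<rho> n < e/4"
    using order_tendstoD(2)[OF \<rho> e4] .
  ultimately show "\<forall>\<^sub>F n in sequentially. \<forall>t\<in>S. dist (G n t) (\<gamma> t) < e"
  proof eventually_elim
    case (elim n)
    show ?case
    proof
      fix t assume t: "t \<in> S"
      then obtain q where q: "q \<in> N" "dist q t < e/4" using N(3) by auto
      have "q \<in> S" using q N(2) by auto
      have "dist (G n t) (\<gamma> t) \<le> dist (G n t) (G n q) + dist (G n q) (\<gamma> t)"
        by (rule dist_triangle)
      moreover have "dist (G n q) (\<gamma> t) \<le> dist (G n q) (\<gamma> q) + dist (\<gamma> q) (\<gamma> t)"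
        by (rule dist_triangle)
      moreover have "dist (G n t) (G n q) \<le> dist q t + \<rho> n"
        using G_lip[OF t \<open>q \<in> S\<close>, of n] by (simp add: dist_commute)
      moreover have "dist (\<gamma> q) (\<gamma> t) \<le> dist q t" using \<gamma>_lip[OF \<open>q \<in> S\<close> t] .
      ultimately show "dist (G n t) (\<gamma> t) < e" using elim q by fastforce
    qed
  qed
qed

lemma Cauchy_if_Cauchy_on_rationals:
  fixes G :: "nat \<Rightarrow> real \<Rightarrow> 'a::metric_space"
  assumes \<rho>: "\<rho> \<longlonglongrightarrow> 0"
    and G_lip: "\<And>n s t. 0 \<le> s \<Longrightarrow> 0 \<le> t \<Longrightarrow> dist (G n s) (G n t) \<le> \<bar>s - t\<bar> + \<rho> n"
    and Cauchy_rat: "\<And>q. q \<in> \<rat> \<Longrightarrow> 0 \<le> q \<Longrightarrow> Cauchy (\<lambda>n. G n q)" and "0 \<le> t"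
  shows "Cauchy (\<lambda>n. G n t)"
proof (rule metric_CauchyI)
  fix e :: real assume "0 < e"
  then obtain q where q: "q \<in> \<rat>" "t < q" "q < t + e/5" using Rats_dense_in_real[of t "t + e/5"] by auto
  have "Cauchy (\<lambda>n. G n q)" using Cauchy_rat q \<open>0 \<le> t\<close> by simp
  then obtain M1 where M1: "\<And>m n. M1 \<le> m \<Longrightarrow> M1 \<le> n \<Longrightarrow> dist (G m q) (G n q) < e/5"
    using metric_CauchyD[of "\<lambda>n. G n q" "e/5"] \<open>0 < e\<close> by auto
  obtain M2 where M2: "\<And>n. M2 \<le> n \<Longrightarrow> \<rho> n < e/5"
    using order_tendstoD(2)[OF \<rho>, of "e/5"] \<open>0 < e\<close> by (auto simp: eventually_sequentially)
  have "dist (G m t) (G n t) < e" if "max M1 M2 \<le> m" "max M1 M2 \<le> n" for m n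
  proof -
    have "dist (G m t) (G n t) \<le> dist (G m t) (G m q) + dist (G m q) (G n t)"
      by (rule dist_triangle)
    moreover have "dist (G m q) (G n t) \<le> dist (G m q) (G n q) + dist (G n q) (G n t)"
      by (rule dist_triangle)
    moreover have "dist (G m t) (G m q) \<le> \<bar>t - q\<bar> + \<rho> m"
      and "dist (G n q) (G n t) \<le> \<bar>q - t\<bar> + \<rho> n"
      using G_lip[of t q m] G_lip[of q t n] \<open>0 \<le> t\<close> q by auto
    moreover have "dist (G m q) (G n q) < e/5" "\<rho> m < e/5" "\<rho> n < e/5"
      using M1 M2 that by auto
    ultimately show ?thesis using q by linarith
  qed
  then show "\<exists>M. \<forall>m\<ge>M. \<forall>n\<ge>M. dist (G m t) (G n t) < e" by blast
qed

lemma asymptotically_lipschitz_limit: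
  fixes F :: "nat \<Rightarrow> real \<Rightarrow> 'a::metric_space"
  assumes cpt: "compact (UNIV :: 'a set)" and \<rho>: "\<rho> \<longlonglongrightarrow> 0"
    and F_lip: "\<And>n s t. 0 \<le> s \<Longrightarrow> 0 \<le> t \<Longrightarrow> dist (F n s) (F n t) \<le> \<bar>s - t\<bar> + \<rho> n"
  obtains k \<gamma> where "strict_mono k" "1-lipschitz_on {0..} \<gamma>"
    "\<And>B. uniform_limit {0..B} (\<lambda>n. F (k n)) \<gamma> sequentially"
proof -
  obtain k where k: "strict_mono k" and conv_rat: "\<And>q. convergent (\<lambda>n. F (k n) (of_rat q))"
    using subseq_pointwise_convergent[OF cpt, of "\<lambda>n q. F n (of_rat q)"] by blast
  have \<rho>k: "(\<lambda>n. \<rho> (k n)) \<longlonglongrightarrow> 0"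
    using LIMSEQ_subseq_LIMSEQ[OF \<rho> k] by (simp add: o_def)
  have "Cauchy (\<lambda>n. F (k n) t)" if "0 \<le> t" for t
  proof (rule Cauchy_if_Cauchy_on_rationals[OF \<rho>k _ _ that])
    show "dist (F (k n) s) (F (k n) t) \<le> \<bar>s - t\<bar> + \<rho> (k n)" if "0 \<le> s" "0 \<le> t" for n s t
      using F_lip[OF that] .
    fix q :: real assume "q \<in> \<rat>"
    then obtain q' where "q = of_rat q'" by (rule Rats_cases)
    then show "Cauchy (\<lambda>n. F (k n) q)" using conv_rat[of q'] by (simp add: convergent_Cauchy)
  qed
  then have "convergent (\<lambda>n. F (k n) t)" if "0 \<le> t" for t
    using that compact_imp_complete[OF cpt] by (simp add: complete_def convergent_def)
  then obtain \<gamma> where lim: "\<And>t. 0 \<le> t \<Longrightarrow> (\<lambda>n. F (k n) t) \<longlonglongrightarrow> \<gamma> t"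
    unfolding convergent_def by metis
  have \<gamma>_lip: "dist (\<gamma> s) (\<gamma> t) \<le> \<bar>s - t\<bar>" if "0 \<le> s" "0 \<le> t" for s t
  proof (rule tendsto_le[OF trivial_limit_sequentially])
    show "(\<lambda>n. \<bar>s - t\<bar> + \<rho> (k n)) \<longlonglongrightarrow> \<bar>s - t\<bar>"
      using tendsto_add[OF tendsto_const \<rho>k] by simp
    show "(\<lambda>n. dist (F (k n) s) (F (k n) t)) \<longlonglongrightarrow> dist (\<gamma> s) (\<gamma> t)"
      using that by (intro tendsto_dist lim)
  qed (use that F_lip in auto)
  show thesis
  proof (rule that[OF k])
    show "1-lipschitz_on {0..} \<gamma>"
      using \<gamma>_lip by (intro lipschitz_onI) (auto simp: dist_real_def)
    show "uniform_limit {0..B} (\<lambda>n. F (k n)) \<gamma> sequentially" for B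
      using lim \<rho>k F_lip \<gamma>_lip
      by (intro uniform_limit_asymptotically_lipschitz) (auto simp: dist_real_def)
  qed
qed

lemma compact_uniform_neighbourhood:
  fixes f :: "'a::metric_space \<Rightarrow> real"
  assumes "compact C" "C \<subseteq> U" "open U" "continuous_on U f" "0 < \<delta>"
  obtains e where "0 < e" "\<And>p y. p \<in> C \<Longrightarrow> dist y p < e \<Longrightarrow> y \<in> U \<and> \<bar>f y - f p\<bar> < \<delta>"
proof -
  have "\<exists>\<rho>>0. ball p \<rho> \<subseteq> U \<and> (\<forall>y\<in>ball p \<rho>. \<bar>f y - f p\<bar> < \<delta>/2)" if "p \<in> C" for p
  proof -
    have "p \<in> U" using that assms(2) by auto
    obtain \<rho>1 where "\<rho>1 > 0" "ball p \<rho>1 \<subseteq> U" using \<open>open U\<close> \<open>p \<in> U\<close> open_contains_ball by blast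
    moreover obtain \<rho>2 where "\<rho>2 > 0" "\<And>y. y \<in> U \<Longrightarrow> dist y p < \<rho>2 \<Longrightarrow> dist (f y) (f p) < \<delta>/2"
      using assms(4)[unfolded continuous_on_iff] \<open>p \<in> U\<close> \<open>0 < \<delta>\<close> by (metis half_gt_zero)
    ultimately show ?thesis
      by (intro exI[of _ "min \<rho>1 \<rho>2"]) (auto simp: dist_real_def dist_commute subset_iff)
  qed
  then obtain \<rho> where \<rho>: "\<And>p. p \<in> C \<Longrightarrow> \<rho> p > 0 \<and> ball p (\<rho> p) \<subseteq> U \<and> (\<forall>y\<in>ball p (\<rho> p). \<bar>f y - f p\<bar> < \<delta>/2)"
    by metis
  have "C \<subseteq> \<Union> ((\<lambda>p. ball p (\<rho> p)) ` C)" using \<rho> by force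
  from Heine_Borel_lemma[OF \<open>compact C\<close> this]
  obtain e where e: "e > 0" "\<And>x. x \<in> C \<Longrightarrow> \<exists>G\<in>(\<lambda>p. ball p (\<rho> p)) ` C. ball x e \<subseteq> G"
    by blast
  show thesis
  proof (rule that[OF e(1)])
    fix p y assume "p \<in> C" and "dist y p < e"
    obtain q where q: "q \<in> C" "ball p e \<subseteq> ball q (\<rho> q)" using e(2)[OF \<open>p \<in> C\<close>] by auto
    have "y \<in> ball q (\<rho> q)" "p \<in> ball q (\<rho> q)"
      using q(2) \<open>dist y p < e\<close> e(1) by (auto simp: dist_commute subset_iff)
    then have "y \<in> U" "\<bar>f y - f q\<bar> < \<delta>/2" "\<bar>f p - f q\<bar> < \<delta>/2" using \<rho>[OF q(1)] by auto
    then show "y \<in> U \<and> \<bar>f y - f p\<bar> < \<delta>" by linarith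
  qed
qed

lemma first_exit_time:
  fixes \<gamma> :: "real \<Rightarrow> 'a::topological_space"
  assumes "open \<Omega>" "0 \<le> B" "continuous_on {0..B} \<gamma>" "\<gamma> 0 \<in> \<Omega>"
    and "\<gamma> ` {0..B} \<subseteq> closure \<Omega>" "\<gamma> B \<in> frontier \<Omega>"
  obtains T where "0 < T" "T \<le> B" "\<gamma> T \<in> frontier \<Omega>" "\<gamma> ` {0..<T} \<subseteq> \<Omega>"
proof -
  define H where "H = {0..B} \<inter> \<gamma> -` frontier \<Omega>"
  have "B \<in> H" using assms by (auto simp: H_def)
  have "closed H" unfolding H_def using assms(3) by (intro continuous_closed_preimage frontier_closed) auto
  have "bdd_below H" unfolding bdd_below_def H_def by auto
  define T where "T = Inf H"
  have "T \<in> H" using closed_contains_Inf[OF _ \<open>bdd_below H\<close> \<open>closed H\<close>] \<open>B \<in> H\<close> unfolding T_def by auto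
  have "\<gamma> 0 \<notin> frontier \<Omega>" using assms(1,4) by (simp add: frontier_def interior_open)
  then have "0 < T" using \<open>T \<in> H\<close> by (cases "T = 0") (auto simp: H_def)
  have inside: "\<gamma> t \<in> \<Omega>" if t: "t \<in> {0..<T}" for t
  proof -
    have "t \<notin> H"
    proof
      assume "t \<in> H"
      then have "T \<le> t" unfolding T_def using \<open>bdd_below H\<close> by (rule cInf_lower)
      then show False using t by simp
    qed
    then have "\<gamma> t \<notin> frontier \<Omega>" using t \<open>T \<in> H\<close> by (auto simp: H_def)
    moreover have "\<gamma> t \<in> closure \<Omega>" using assms(5) t \<open>T \<in> H\<close> by (auto simp: H_def)
    ultimately show ?thesis using assms(1) by (simp add: frontier_def interior_open)
  qed
  show thesis
    using that[OF \<open>0 < T\<close>] inside \<open>T \<in> H\<close> by (auto simp: H_def image_subset_iff)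
qed

section \<open>The value bounds the cost of every admissible curve\<close>

locale eikonal_solution =
  fixes \<Omega> :: "'a::metric_space set" and l u :: "'a \<Rightarrow> real" and c :: real
  assumes compact_universe: "compact (UNIV :: 'a set)" and open_domain: "open \<Omega>"
    and continuous_l: "continuous_on \<Omega> l" and c_pos: "0 < c" and c_le_l: "\<And>x. x \<in> \<Omega> \<Longrightarrow> c \<le> l x"
    and continuous_u: "continuous_on (closure \<Omega>) u"
    and slope_eq: "\<And>x. x \<in> \<Omega> \<Longrightarrow> local_slope (closure \<Omega>) u x = ereal (l x)"
begin

lemma l_pos: "x \<in> \<Omega> \<Longrightarrow> 0 < l x"
  using c_le_l[of x] c_pos by linarith

lemma islimpt_closure:
  assumes "x \<in> \<Omega>" shows "x islimpt closure \<Omega>"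
proof (rule ccontr)
  assume "\<not> x islimpt closure \<Omega>"
  then have "local_slope (closure \<Omega>) u x = 0" by (simp add: local_slope_def)
  with slope_eq[OF assms] l_pos[OF assms] show False by simp
qed

lemma slope_upper_bound:
  assumes "x \<in> \<Omega>" "l x < a"
  obtains \<delta> where "0 < \<delta>" "\<And>y. y \<in> closure \<Omega> \<Longrightarrow> dist y x < \<delta> \<Longrightarrow> u x - u y \<le> a * dist x y"
proof -
  have "Limsup (at x within closure \<Omega>) (\<lambda>y. ereal (max (u x - u y) 0 / dist x y)) < ereal a"
    using slope_eq[OF assms(1)] islimpt_closure[OF assms(1)] assms(2) by (simp add: local_slope_def)
  from Limsup_lessD[OF this] obtain \<delta> where "0 < \<delta>"
    and \<delta>: "\<And>y. y \<in> closure \<Omega> \<Longrightarrow> y \<noteq> x \<Longrightarrow> dist y x < \<delta> \<Longrightarrow> max (u x - u y) 0 / dist x y < a"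
    by (auto simp: eventually_at)
  have "u x - u y \<le> a * dist x y" if "y \<in> closure \<Omega>" "dist y x < \<delta>" for y
  proof (cases "y = x")
    case False
    then have "max (u x - u y) 0 < a * dist x y"
      using \<delta>[OF that(1) False that(2)] by (simp add: divide_less_eq)
    then show ?thesis by linarith
  qed simp
  with \<open>0 < \<delta>\<close> show thesis by (rule that)
qed

lemma slope_lower_bound:
  assumes "x \<in> \<Omega>" "0 \<le> a" "a < l x" "0 < r"
  obtains y where "y \<in> closure \<Omega>" "0 < dist x y" "dist x y < r" "u y < u x - a * dist x y"
proof -
  let ?F = "at x within closure \<Omega>" and ?q = "\<lambda>y. ereal (max (u x - u y) 0 / dist x y)"
  have "ereal a < Limsup ?F ?q"
    using slope_eq[OF assms(1)] islimpt_closure[OF assms(1)] assms(3) by (simp add: local_slope_def)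
  then have "\<exists>\<^sub>F y in ?F. ereal a < ?q y"
  proof (rule contrapos_pp)
    assume "\<not> (\<exists>\<^sub>F y in ?F. ereal a < ?q y)"
    then have "\<forall>\<^sub>F y in ?F. ?q y \<le> ereal a" by (simp add: not_frequently not_less)
    then show "\<not> ereal a < Limsup ?F ?q" by (simp add: Limsup_bounded not_less)
  qed
  moreover have "\<forall>\<^sub>F y in ?F. y \<in> closure \<Omega> \<and> y \<noteq> x \<and> dist y x < r"
    using assms(4) by (auto simp: eventually_at)
  ultimately have "\<exists>\<^sub>F y in ?F. (y \<in> closure \<Omega> \<and> y \<noteq> x \<and> dist y x < r) \<and> ereal a < ?q y"
    by (rule frequently_eventually_conj)
  from frequently_ex[OF this] obtain y
    where y: "y \<in> closure \<Omega>" "y \<noteq> x" "dist y x < r" "a < max (u x - u y) 0 / dist x y"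
    by auto
  then have "a * dist x y < max (u x - u y) 0" by (simp add: less_divide_eq)
  moreover have "0 \<le> a * dist x y" using \<open>0 \<le> a\<close> by simp
  ultimately have "u y < u x - a * dist x y" by linarith
  with y show thesis by (intro that) (auto simp: dist_commute)
qed

lemma u_drop_le_integral_locally:
  fixes \<gamma> :: "real \<Rightarrow> 'a"
  assumes lip: "1-lipschitz_on {0..t} \<gamma>" and inside: "\<gamma> ` {0..t} \<subseteq> \<Omega>" and "0 < \<eta>"
    and m: "m \<in> {0..<t}"
  obtains h where "0 < h" "\<And>s. m < s \<Longrightarrow> s \<le> m + h \<Longrightarrow> s \<le> t \<Longrightarrow>
      u (\<gamma> m) - u (\<gamma> s) \<le> integral {m..s} (\<lambda>s. l (\<gamma> s)) + \<eta> * (s - m)"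
proof -
  have "m \<in> {0..t}" "\<gamma> m \<in> \<Omega>" using inside m by auto
  obtain \<delta> where "0 < \<delta>" and \<delta>: "\<And>y. y \<in> closure \<Omega> \<Longrightarrow> dist y (\<gamma> m) < \<delta> \<Longrightarrow>
      u (\<gamma> m) - u y \<le> (l (\<gamma> m) + \<eta>/2) * dist (\<gamma> m) y"
    using slope_upper_bound[OF \<open>\<gamma> m \<in> \<Omega>\<close>, of "l (\<gamma> m) + \<eta>/2"] \<open>0 < \<eta>\<close> by auto
  obtain h1 where "0 < h1" and low: "\<And>s. m \<le> s \<Longrightarrow> s \<le> m + h1 \<Longrightarrow> s \<le> t \<Longrightarrow>
      (l (\<gamma> m) - \<eta>/2) * (s - m) \<le> integral {m..s} (\<lambda>s. l (\<gamma> s))"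
    using integral_ge_near_left_end[OF continuous_on_compose2[OF continuous_l lipschitz_on_continuous_on[OF lip] inside]
        \<open>m \<in> {0..t}\<close>, of "\<eta>/2"] \<open>0 < \<eta>\<close> by auto
  have "u (\<gamma> m) - u (\<gamma> s) \<le> integral {m..s} (\<lambda>s. l (\<gamma> s)) + \<eta> * (s - m)"
    if s: "m < s" "s \<le> m + min (\<delta>/2) h1" "s \<le> t" for s
  proof -
    have "s \<in> {0..t}" using s m by auto
    then have "dist (\<gamma> s) (\<gamma> m) \<le> s - m"
      using lipschitz_onD[OF lip _ \<open>m \<in> {0..t}\<close>, of s] s by (simp add: dist_real_def)
    moreover have "\<gamma> s \<in> closure \<Omega>" using inside \<open>s \<in> {0..t}\<close> closure_subset by blast
    ultimately have "u (\<gamma> m) - u (\<gamma> s) \<le> (l (\<gamma> m) + \<eta>/2) * dist (\<gamma> m) (\<gamma> s)"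
      using \<delta> s \<open>0 < \<delta>\<close> by auto
    also have "\<dots> \<le> (l (\<gamma> m) + \<eta>/2) * (s - m)"
      using \<open>dist (\<gamma> s) (\<gamma> m) \<le> s - m\<close> l_pos[OF \<open>\<gamma> m \<in> \<Omega>\<close>] \<open>0 < \<eta>\<close>
      by (intro mult_left_mono) (auto simp: dist_commute)
    finally have "u (\<gamma> m) - u (\<gamma> s) \<le> l (\<gamma> m) * (s - m) + \<eta>/2 * (s - m)"
      by (simp add: distrib_right)
    moreover have "l (\<gamma> m) * (s - m) - \<eta>/2 * (s - m) \<le> integral {m..s} (\<lambda>s. l (\<gamma> s))"
      using low[of s] s by (simp add: left_diff_distrib)
    moreover have "\<eta>/2 * (s - m) + \<eta>/2 * (s - m) = \<eta> * (s - m)" by simp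
    ultimately show ?thesis by linarith
  qed
  moreover have "0 < min (\<delta>/2) h1" using \<open>0 < \<delta>\<close> \<open>0 < h1\<close> by simp
  ultimately show thesis using that by blast
qed

lemma u_drop_le_integral:
  fixes \<gamma> :: "real \<Rightarrow> 'a"
  assumes "0 \<le> t" and lip: "1-lipschitz_on {0..t} \<gamma>" and inside: "\<gamma> ` {0..t} \<subseteq> \<Omega>"
  shows "u (\<gamma> 0) - u (\<gamma> t) \<le> integral {0..t} (\<lambda>s. l (\<gamma> s))"
proof (rule field_le_epsilon)
  fix \<epsilon> :: real assume "0 < \<epsilon>"
  define \<eta> where "\<eta> = \<epsilon> / (t + 1)"
  have "0 < \<eta>" using \<open>0 < \<epsilon>\<close> \<open>0 \<le> t\<close> by (simp add: \<eta>_def)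
  have "\<eta> * t \<le> \<epsilon>" using \<open>0 < \<epsilon>\<close> \<open>0 \<le> t\<close> by (simp add: \<eta>_def field_simps)
  have \<gamma>c: "continuous_on {0..t} \<gamma>" using lipschitz_on_continuous_on[OF lip] .
  have int: "(\<lambda>s. l (\<gamma> s)) integrable_on {0..t}"
    using continuous_on_compose2[OF continuous_l \<gamma>c inside] by (rule integrable_continuous_interval)
  have u\<gamma>c: "continuous_on {0..t} (\<lambda>s. u (\<gamma> s))"
    using continuous_on_compose2[OF continuous_u \<gamma>c] inside closure_subset by blast
  define \<psi> where "\<psi> s = u (\<gamma> s) + integral {0..s} (\<lambda>s. l (\<gamma> s)) + \<eta> * s - u (\<gamma> 0)" for s
  have "continuous_on {0..t} \<psi>"
    unfolding \<psi>_def by (intro continuous_intros u\<gamma>c indefinite_integral_continuous_1 int)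
  then have "\<forall>s\<in>{0..t}. 0 \<le> \<psi> s"
  proof (rule continuous_induct_right[OF \<open>0 \<le> t\<close>])
    show "0 \<le> \<psi> 0" by (simp add: \<psi>_def)
    fix m assume m: "m \<in> {0..<t}" and "0 \<le> \<psi> m"
    obtain h where "0 < h" and h: "\<And>s. m < s \<Longrightarrow> s \<le> m + h \<Longrightarrow> s \<le> t \<Longrightarrow>
        u (\<gamma> m) - u (\<gamma> s) \<le> integral {m..s} (\<lambda>s. l (\<gamma> s)) + \<eta> * (s - m)"
      using u_drop_le_integral_locally[OF lip inside \<open>0 < \<eta>\<close> m] by blast
    have "0 \<le> \<psi> s" if s: "m < s" "s \<le> m + h" "s \<le> t" for s
    proof -
      have "(\<lambda>s. l (\<gamma> s)) integrable_on {0..s}"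
        by (rule integrable_on_subinterval[OF int]) (use s in auto)
      then have "integral {0..s} (\<lambda>s. l (\<gamma> s)) = integral {0..m} (\<lambda>s. l (\<gamma> s)) + integral {m..s} (\<lambda>s. l (\<gamma> s))"
        using m s by (intro Henstock_Kurzweil_Integration.integral_combine[symmetric]) auto
      then show ?thesis using h[OF s] \<open>0 \<le> \<psi> m\<close> unfolding \<psi>_def by (simp add: algebra_simps)
    qed
    with \<open>0 < h\<close> show "\<exists>h>0. \<forall>s. m < s \<and> s \<le> m + h \<and> s \<le> t \<longrightarrow> 0 \<le> \<psi> s" by blast
  qed
  then have "0 \<le> \<psi> t" using \<open>0 \<le> t\<close> by auto
  then show "u (\<gamma> 0) - u (\<gamma> t) \<le> integral {0..t} (\<lambda>s. l (\<gamma> s)) + \<epsilon>"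
    using \<open>\<eta> * t \<le> \<epsilon>\<close> unfolding \<psi>_def by linarith
qed

lemma u_le_cost_along_curve:
  fixes \<gamma> :: "real \<Rightarrow> 'a"
  assumes "0 < T" and lip: "1-lipschitz_on {0..T} \<gamma>"
    and inside: "\<gamma> ` {0..<T} \<subseteq> \<Omega>" and "\<gamma> ` {0..T} \<subseteq> closure \<Omega>"
  shows "ereal (u (\<gamma> 0))
    \<le> enn2ereal (\<integral>\<^sup>+ s. ennreal (l (\<gamma> s)) * indicator {0..T} s \<partial>lborel) + ereal (u (\<gamma> T))"
proof -
  have \<gamma>c: "continuous_on {0..T} \<gamma>" using lipschitz_on_continuous_on[OF lip] .
  have sub: "\<gamma> ` {0..t} \<subseteq> \<Omega>" if "t \<in> {0..<T}" for t
    using that by (intro subset_trans[OF _ inside] image_mono) auto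
  have u_drop_cont: "continuous_on {0..T} (\<lambda>t. u (\<gamma> 0) - u (\<gamma> t))"
    using continuous_on_compose2[OF continuous_u \<gamma>c \<open>\<gamma> ` {0..T} \<subseteq> closure \<Omega>\<close>]
    by (intro continuous_intros)
  have "ereal (u (\<gamma> 0) - u (\<gamma> T))
      \<le> enn2ereal (\<integral>\<^sup>+ s. ennreal (l (\<gamma> s)) * indicator {0..T} s \<partial>lborel)"
  proof (rule le_nn_integral_Icc_of_le_integral[OF \<open>0 < T\<close> _ _ u_drop_cont])
    fix t assume t: "t \<in> {0..<T}"
    have "continuous_on {0..t} \<gamma>" by (rule continuous_on_subset[OF \<gamma>c]) (use t in auto)
    then show "continuous_on {0..t} (\<lambda>s. l (\<gamma> s))"
      using continuous_on_compose2[OF continuous_l _ sub[OF t]] by blast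
    show "0 \<le> l (\<gamma> t)" using l_pos sub[OF t] t by (simp add: less_imp_le image_subset_iff)
    show "u (\<gamma> 0) - u (\<gamma> t) \<le> integral {0..t} (\<lambda>s. l (\<gamma> s))"
      using t sub[OF t] lipschitz_on_subset[OF lip] by (intro u_drop_le_integral) auto
  qed
  then show ?thesis
    by (cases "enn2ereal (\<integral>\<^sup>+ s. ennreal (l (\<gamma> s)) * indicator {0..T} s \<partial>lborel)") auto
qed

section \<open>Greedy descent chains\<close>

lemma bdd_below_u: "bdd_below (u ` closure \<Omega>)"
proof -
  have "compact (closure \<Omega>)"
    using compact_universe closed_closure compact_Int_closed[of UNIV "closure \<Omega>"] by simp
  then show ?thesis
    using compact_continuous_image[OF continuous_u] by (intro bounded_imp_bdd_below compact_imp_bounded)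
qed

definition u_inf :: real where "u_inf = Inf (u ` closure \<Omega>)"

lemma u_inf_le: "y \<in> closure \<Omega> \<Longrightarrow> u_inf \<le> u y"
  unfolding u_inf_def using bdd_below_u by (simp add: cInf_lower)

context
  fixes r \<eta> :: real and x0 :: 'a
  assumes r_pos: "0 < r" and \<eta>_pos: "0 < \<eta>" and \<eta>_less: "\<eta> < c" and x0: "x0 \<in> \<Omega>"
begin

definition descent_steps :: "'a \<Rightarrow> 'a set" where
  "descent_steps x = {y \<in> closure \<Omega>. 0 < dist x y \<and> dist x y < r \<and> u y \<le> u x - (l x - \<eta>) * dist x y}"

definition next_point :: "'a \<Rightarrow> 'a" where
  "next_point x = (SOME y. y \<in> descent_steps x \<and> (SUP z\<in>descent_steps x. dist x z) < 2 * dist x y)"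

definition chain :: "nat \<Rightarrow> 'a" where
  "chain i = ((\<lambda>x. if x \<in> \<Omega> then next_point x else x) ^^ i) x0"

definition step_len :: "nat \<Rightarrow> real" where
  "step_len i = dist (chain i) (chain (Suc i))"

definition arclen :: "nat \<Rightarrow> real" where
  "arclen k = (\<Sum>i<k. step_len i)"

lemma descent_steps_nonempty:
  assumes "x \<in> \<Omega>" shows "descent_steps x \<noteq> {}"
proof -
  have "0 \<le> l x - \<eta>" using c_le_l[OF assms] \<eta>_less by simp
  then obtain y where "y \<in> closure \<Omega>" "0 < dist x y" "dist x y < r" "u y < u x - (l x - \<eta>) * dist x y"
    using slope_lower_bound[OF assms _ _ r_pos, of "l x - \<eta>"] \<eta>_pos by auto
  then show ?thesis unfolding descent_steps_def by force
qed

lemma bdd_above_descent_steps: "bdd_above (dist x ` descent_steps x)"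
  by (rule bdd_aboveI[of _ r]) (auto simp: descent_steps_def)

lemma next_point_spec:
  assumes "x \<in> \<Omega>"
  shows "next_point x \<in> descent_steps x"
    and "y \<in> descent_steps x \<Longrightarrow> dist x y < 2 * dist x (next_point x)"
proof -
  let ?S = "SUP z\<in>descent_steps x. dist x z"
  obtain y0 where y0: "y0 \<in> descent_steps x" using descent_steps_nonempty[OF assms] by auto
  moreover have "0 < dist x y0" using y0 by (simp add: descent_steps_def)
  ultimately have "0 < ?S"
    using cSUP_upper[OF y0 bdd_above_descent_steps] by linarith
  then obtain y1 where "y1 \<in> descent_steps x" "?S / 2 < dist x y1"
    using less_cSUP_iff[OF descent_steps_nonempty[OF assms] bdd_above_descent_steps, of "?S / 2"] by auto
  then have "\<exists>y. y \<in> descent_steps x \<and> ?S < 2 * dist x y" by (intro exI[of _ y1]) auto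
  from someI_ex[OF this] have *: "next_point x \<in> descent_steps x" "?S < 2 * dist x (next_point x)"
    unfolding next_point_def by blast+
  show "next_point x \<in> descent_steps x" by (fact *)
  show "dist x y < 2 * dist x (next_point x)" if "y \<in> descent_steps x"
    using cSUP_upper[OF that bdd_above_descent_steps] *(2) by linarith
qed

lemma chain_0 [simp]: "chain 0 = x0"
  by (simp add: chain_def)

lemma chain_Suc: "chain (Suc i) = (if chain i \<in> \<Omega> then next_point (chain i) else chain i)"
  by (simp add: chain_def)

lemma chain_in_closure: "chain i \<in> closure \<Omega>"
proof (induction i)
  case 0
  then show ?case using x0 closure_subset by auto
next
  case (Suc i)
  then show ?case using next_point_spec(1)[of "chain i"] by (auto simp: chain_Suc descent_steps_def)
qed

lemma step_len_less: "step_len i < r"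
  using next_point_spec(1)[of "chain i"] r_pos by (auto simp: step_len_def chain_Suc descent_steps_def)

lemma chain_in_domain_if_step: "0 < step_len i \<Longrightarrow> chain i \<in> \<Omega>"
  by (auto simp: step_len_def chain_Suc split: if_splits)

lemma u_chain_Suc: "u (chain (Suc i)) \<le> u (chain i) - (l (chain i) - \<eta>) * step_len i"
  using next_point_spec(1)[of "chain i"] by (auto simp: step_len_def chain_Suc descent_steps_def)

lemma u_chain_Suc_le: "(c - \<eta>) * step_len i \<le> u (chain i) - u (chain (Suc i))"
proof (cases "0 < step_len i")
  case True
  then have "c \<le> l (chain i)" using chain_in_domain_if_step c_le_l by blast
  then have "(c - \<eta>) * step_len i \<le> (l (chain i) - \<eta>) * step_len i"
    using True by (intro mult_right_mono) auto
  then show ?thesis using u_chain_Suc[of i] by linarith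
next
  case False
  then have "step_len i = 0" by (simp add: step_len_def)
  then show ?thesis using u_chain_Suc[of i] by simp
qed

lemma u_chain_antimono: "i \<le> j \<Longrightarrow> u (chain j) \<le> u (chain i)"
proof (induction j rule: dec_induct)
  case (step j)
  have "0 \<le> (c - \<eta>) * step_len j" using \<eta>_less by (simp add: step_len_def)
  then show ?case using u_chain_Suc_le[of j] step.IH by linarith
qed simp

lemma arclen_Suc: "arclen (Suc k) = arclen k + step_len k"
  by (simp add: arclen_def)

lemma arclen_mono: "i \<le> j \<Longrightarrow> arclen i \<le> arclen j"
  unfolding arclen_def by (rule sum_mono2) (auto simp: step_len_def)

lemma arclen_nonneg: "0 \<le> arclen k"
  using arclen_mono[of 0 k] by (simp add: arclen_def)

lemma descent_sum_le: "(\<Sum>i<k. (l (chain i) - \<eta>) * step_len i) \<le> u x0 - u (chain k)"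
proof (induction k)
  case (Suc k)
  then show ?case using u_chain_Suc[of k] by simp
qed simp

lemma arclen_le: "arclen k \<le> (u x0 - u_inf) / (c - \<eta>)"
proof -
  have "(c - \<eta>) * arclen k \<le> u x0 - u (chain k)"
  proof (induction k)
    case (Suc k)
    then show ?case using u_chain_Suc_le[of k] by (simp add: arclen_Suc algebra_simps)
  qed (simp add: arclen_def)
  then have "(c - \<eta>) * arclen k \<le> u x0 - u_inf" using u_inf_le[OF chain_in_closure[of k]] by linarith
  then show ?thesis using \<eta>_less by (simp add: pos_le_divide_eq mult.commute)
qed

lemma summable_step_len: "summable step_len"
  using arclen_le by (intro summableI_nonneg_bounded) (auto simp: step_len_def arclen_def)

definition total_len :: real where "total_len = suminf step_len"

lemma arclen_tendsto: "arclen \<longlonglongrightarrow> total_len"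
  unfolding arclen_def total_len_def using summable_LIMSEQ[OF summable_step_len] by simp

lemma arclen_le_total_len: "arclen k \<le> total_len"
  unfolding arclen_def total_len_def using summable_step_len
  by (intro sum_le_suminf) (auto simp: step_len_def)

lemma total_len_le: "total_len \<le> (u x0 - u_inf) / (c - \<eta>)"
  using arclen_tendsto arclen_le by (intro LIMSEQ_le_const2) auto

lemma dist_chain_le: "i \<le> j \<Longrightarrow> dist (chain i) (chain j) \<le> arclen j - arclen i"
proof (induction j rule: dec_induct)
  case (step j)
  have "dist (chain i) (chain (Suc j)) \<le> dist (chain i) (chain j) + step_len j"
    unfolding step_len_def by (rule dist_triangle)
  then show ?case using step.IH by (simp add: arclen_Suc)
qed simp

lemma Cauchy_chain: "Cauchy chain"
proof (rule metric_CauchyI)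
  fix e :: real assume "0 < e"
  obtain M where M: "\<And>m n. M \<le> m \<Longrightarrow> M \<le> n \<Longrightarrow> dist (arclen m) (arclen n) < e"
    using LIMSEQ_imp_Cauchy[OF arclen_tendsto] \<open>0 < e\<close> by (meson metric_CauchyD)
  have "dist (chain m) (chain n) < e" if "M \<le> m" "M \<le> n" for m n
    using dist_chain_le[of m n] dist_chain_le[of n m] M[OF that]
    by (cases "m \<le> n") (auto simp: dist_real_def dist_commute)
  then show "\<exists>M. \<forall>m\<ge>M. \<forall>n\<ge>M. dist (chain m) (chain n) < e" by blast
qed

definition chain_limit :: 'a where "chain_limit = lim chain"

lemma chain_tendsto: "chain \<longlonglongrightarrow> chain_limit"
proof -
  have "convergent chain"
    using Cauchy_chain compact_imp_complete[OF compact_universe] unfolding complete_def convergent_def by blast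
  then show ?thesis by (simp add: chain_limit_def convergent_LIMSEQ_iff)
qed

lemma chain_limit_in_closure: "chain_limit \<in> closure \<Omega>"
  using closed_sequentially[OF closed_closure chain_in_closure chain_tendsto] .

lemma dist_chain_limit_le: "dist (chain i) chain_limit \<le> total_len - arclen i"
proof (rule tendsto_le[OF trivial_limit_sequentially])
  show "(\<lambda>j. arclen j - arclen i) \<longlonglongrightarrow> total_len - arclen i"
    by (intro tendsto_intros arclen_tendsto)
  show "(\<lambda>j. dist (chain i) (chain j)) \<longlonglongrightarrow> dist (chain i) chain_limit"
    by (intro tendsto_intros chain_tendsto)
  show "\<forall>\<^sub>F j in sequentially. dist (chain i) (chain j) \<le> arclen j - arclen i"
    using dist_chain_le by (auto simp: eventually_sequentially)
qed

lemma chain_limit_eq_if_outside: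
  assumes "chain i \<notin> \<Omega>" shows "chain_limit = chain i"
proof -
  have "chain (i + k) = chain i" for k
    using assms by (induction k) (auto simp: chain_Suc)
  then have "\<forall>\<^sub>F j in sequentially. chain j = chain i"
    unfolding eventually_sequentially by (metis le_add_diff_inverse)
  then show ?thesis
    using LIMSEQ_unique[OF chain_tendsto tendsto_eventually] by blast
qed

lemma u_chain_limit_le: "u chain_limit \<le> u (chain i)"
  using continuous_on_tendsto_compose[OF continuous_u chain_tendsto chain_limit_in_closure]
  by (rule LIMSEQ_le_const2) (use u_chain_antimono chain_in_closure in auto)

lemma descent_step_lt_twice_step_len:
  assumes "chain i \<in> \<Omega>" "y \<in> closure \<Omega>" "0 < dist (chain i) y" "dist (chain i) y < r"
    and "u y \<le> u (chain i) - (l (chain i) - \<eta>) * dist (chain i) y"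
  shows "dist (chain i) y < 2 * step_len i"
  using next_point_spec(2)[OF assms(1)] assms by (simp add: descent_steps_def step_len_def chain_Suc)

text \<open>
  If the limit z were in \<Omega>, the slope at z would give a descent step from z of some fixed length;
  seen from chain points close enough to z it is still an admissible step, so the near-maximal
  choice of the steps would keep them from tending to 0.
\<close>

lemma chain_limit_notin: "chain_limit \<notin> \<Omega>"
proof
  let ?z = chain_limit
  assume "?z \<in> \<Omega>"
  then have inside: "chain i \<in> \<Omega>" for i
    using chain_limit_eq_if_outside by metis
  have "c \<le> l ?z" using c_le_l \<open>?z \<in> \<Omega>\<close> by auto
  then obtain y where y: "y \<in> closure \<Omega>" "0 < dist ?z y" "dist ?z y < r/2"
    "u y < u ?z - (l ?z - \<eta>/2) * dist ?z y"
    using slope_lower_bound[OF \<open>?z \<in> \<Omega>\<close>, of "l ?z - \<eta>/2" "r/2"] \<eta>_pos \<eta>_less r_pos by auto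
  define s where "s = dist ?z y"
  have dist_lim: "(\<lambda>i. dist (chain i) ?z) \<longlonglongrightarrow> 0"
    using tendsto_dist[OF chain_tendsto tendsto_const[of ?z]] by simp
  have "(\<lambda>i. (l (chain i) - \<eta>) * (s + dist (chain i) ?z)) \<longlonglongrightarrow> (l ?z - \<eta>) * (s + 0)"
    using continuous_on_tendsto_compose[OF continuous_l chain_tendsto \<open>?z \<in> \<Omega>\<close>] inside
    by (intro tendsto_intros dist_lim) auto
  moreover have "(l ?z - \<eta>) * (s + 0) < (l ?z - \<eta>/2) * s"
    using y(2) \<eta>_pos by (simp add: s_def algebra_simps)
  ultimately have "\<forall>\<^sub>F i in sequentially. (l (chain i) - \<eta>) * (s + dist (chain i) ?z) < (l ?z - \<eta>/2) * s"
    by (rule order_tendstoD)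
  moreover have "\<forall>\<^sub>F i in sequentially. dist (chain i) ?z < s/2"
    using order_tendstoD(2)[OF dist_lim, of "s/2"] y(2) by (simp add: s_def)
  moreover have "\<forall>\<^sub>F i in sequentially. step_len i < s/4"
    using order_tendstoD(2)[OF summable_LIMSEQ_zero[OF summable_step_len], of "s/4"] y(2) by (simp add: s_def)
  ultimately have "\<forall>\<^sub>F i in sequentially. (l (chain i) - \<eta>) * (s + dist (chain i) ?z) < (l ?z - \<eta>/2) * s
      \<and> dist (chain i) ?z < s/2 \<and> step_len i < s/4"
    by (intro eventually_conj)
  then obtain i where i: "(l (chain i) - \<eta>) * (s + dist (chain i) ?z) < (l ?z - \<eta>/2) * s"
    "dist (chain i) ?z < s/2" "step_len i < s/4"
    unfolding eventually_sequentially by blast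
  have far: "s - dist (chain i) ?z \<le> dist (chain i) y" and near: "dist (chain i) y \<le> s + dist (chain i) ?z"
    using dist_triangle[of ?z y "chain i"] dist_triangle[of "chain i" y ?z] by (auto simp: s_def dist_commute)
  have "0 \<le> l (chain i) - \<eta>" using c_le_l[OF inside, of i] \<eta>_less by linarith
  then have "(l (chain i) - \<eta>) * dist (chain i) y \<le> (l (chain i) - \<eta>) * (s + dist (chain i) ?z)"
    by (rule mult_left_mono[OF near])
  then have "u y \<le> u (chain i) - (l (chain i) - \<eta>) * dist (chain i) y"
    using y(4) i(1) u_chain_limit_le[of i] unfolding s_def by linarith
  moreover have "0 < dist (chain i) y" "dist (chain i) y < r"
    using far near i(2) y(3) unfolding s_def by linarith+
  ultimately have "dist (chain i) y < 2 * step_len i"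
    using inside y(1) by (intro descent_step_lt_twice_step_len)
  then show False using far i by linarith
qed

lemma chain_limit_in_frontier: "chain_limit \<in> frontier \<Omega>"
  using chain_limit_in_closure chain_limit_notin open_domain by (simp add: frontier_def interior_open)

text \<open>
  The arc-length parametrisation of the chain: \<open>chain_path s = chain i\<close> for
  \<open>arclen i \<le> s < arclen (Suc i)\<close>, and \<open>chain_limit\<close> from \<open>total_len\<close> on.
\<close>

definition seg_index :: "real \<Rightarrow> nat" where
  "seg_index s = (LEAST i. s < arclen (Suc i))"

definition chain_path :: "real \<Rightarrow> 'a" where
  "chain_path s = (if s < total_len then chain (seg_index s) else chain_limit)"

lemma seg_index_less:
  assumes "s < total_len" shows "s < arclen (Suc (seg_index s))"
proof -
  obtain N where "\<forall>n\<ge>N. s < arclen n"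
    using order_tendstoD(1)[OF arclen_tendsto assms] unfolding eventually_sequentially by blast
  then have "\<exists>i. s < arclen (Suc i)" by (intro exI[of _ N]) auto
  then show ?thesis unfolding seg_index_def by (rule LeastI_ex)
qed

lemma seg_index_le: "s < arclen (Suc j) \<Longrightarrow> seg_index s \<le> j"
  unfolding seg_index_def by (rule Least_le)

lemma arclen_seg_index_le:
  assumes "0 \<le> s" shows "arclen (seg_index s) \<le> s"
proof (cases "seg_index s")
  case (Suc k)
  then have "\<not> s < arclen (Suc k)" unfolding seg_index_def by (metis lessI not_less_Least)
  then show ?thesis using Suc by simp
qed (use assms in \<open>simp add: arclen_def\<close>)

lemma chain_path_in_closure: "chain_path s \<in> closure \<Omega>"
  using chain_in_closure chain_limit_in_closure by (simp add: chain_path_def)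

lemma step_len_0_pos: "0 < step_len 0"
  using next_point_spec(1)[OF x0] by (simp add: step_len_def chain_Suc x0 descent_steps_def)

lemma chain_path_0: "chain_path 0 = x0"
proof -
  have "0 < total_len" using arclen_le_total_len[of 1] step_len_0_pos by (simp add: arclen_def)
  moreover have "seg_index 0 = 0" using seg_index_le[of 0 0] step_len_0_pos by (simp add: arclen_def)
  ultimately show ?thesis by (simp add: chain_path_def)
qed

lemma chain_path_in_frontier: "(u x0 - u_inf) / (c - \<eta>) \<le> s \<Longrightarrow> chain_path s \<in> frontier \<Omega>"
  using total_len_le chain_limit_in_frontier by (simp add: chain_path_def)

lemma arclen_seg_index_gt: "s < total_len \<Longrightarrow> s - r < arclen (seg_index s)"
  using seg_index_less[of s] step_len_less[of "seg_index s"] by (simp add: arclen_Suc)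

lemma chain_path_almost_lipschitz:
  assumes "0 \<le> s" "0 \<le> t" shows "dist (chain_path s) (chain_path t) \<le> \<bar>s - t\<bar> + r"
proof -
  have ordered: "dist (chain_path s) (chain_path t) \<le> t - s + r" if "0 \<le> s" "s \<le> t" for s t
  proof (cases "t < total_len")
    case True
    then have "seg_index s \<le> seg_index t" using seg_index_less[OF True] that by (intro seg_index_le) simp
    then have "dist (chain_path s) (chain_path t) \<le> arclen (seg_index t) - arclen (seg_index s)"
      using True that dist_chain_le by (simp add: chain_path_def)
    then show ?thesis using arclen_seg_index_le[of t] arclen_seg_index_gt[of s] True that by simp
  next
    case False
    show ?thesis
    proof (cases "s < total_len")
      case True
      then have "dist (chain_path s) (chain_path t) \<le> total_len - arclen (seg_index s)"
        using False dist_chain_limit_le by (simp add: chain_path_def)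
      then show ?thesis using arclen_seg_index_gt[OF True] False by simp
    qed (use False that r_pos in \<open>simp add: chain_path_def\<close>)
  qed
  show ?thesis
    using ordered[of s t] ordered[of t s] assms by (cases "s \<le> t") (auto simp: dist_commute)
qed

lemma dist_chain_path_chain:
  assumes "arclen i \<le> s" "s \<le> arclen (Suc i)" "s < total_len"
  shows "dist (chain_path s) (chain i) < r"
proof -
  have "arclen (Suc (seg_index s)) \<le> arclen i \<Longrightarrow> False"
    using seg_index_less[OF assms(3)] assms(1) by simp
  then have "i \<le> seg_index s" using arclen_mono[of "Suc (seg_index s)" i] by (meson not_less_eq_eq)
  then have "dist (chain_path s) (chain i) \<le> arclen (seg_index s) - arclen i"
    using assms(3) dist_chain_le by (simp add: chain_path_def dist_commute)
  also have "\<dots> \<le> step_len i"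
    using arclen_seg_index_le[of s] arclen_nonneg[of i] assms by (simp add: arclen_Suc)
  finally show ?thesis using step_len_less[of i] by simp
qed

lemma integral_along_segment_le:
  fixes f :: "real \<Rightarrow> real"
  assumes "arclen i \<le> a" "a \<le> b" "b \<le> arclen (Suc i)" "b < total_len" "f integrable_on {a..b}"
    and near: "\<And>s y. s \<in> {a..b} \<Longrightarrow> dist (chain_path s) y < r \<Longrightarrow> f s \<le> l y + \<delta>"
  shows "integral {a..b} f \<le> (l (chain i) + \<delta>) * (b - a)"
proof -
  have "f s \<le> l (chain i) + \<delta>" if "s \<in> {a..b}" for s
    using that assms by (intro near dist_chain_path_chain) auto
  then have "integral {a..b} f \<le> integral {a..b} (\<lambda>_. l (chain i) + \<delta>)"
    using assms(5) by (intro integral_le) auto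
  then show ?thesis using \<open>a \<le> b\<close> by (simp add: mult.commute)
qed

lemma integral_arclen_eq_sum:
  fixes f :: "real \<Rightarrow> real"
  assumes "f integrable_on {0..arclen k}"
  shows "integral {0..arclen k} f = (\<Sum>i<k. integral {arclen i..arclen (Suc i)} f)"
  using assms
proof (induction k)
  case (Suc k)
  have "arclen k \<le> arclen (Suc k)" by (rule arclen_mono) simp
  then have "f integrable_on {0..arclen k}"
    by (intro integrable_on_subinterval[OF Suc.prems]) (simp add: arclen_nonneg)
  moreover have "integral {0..arclen (Suc k)} f = integral {0..arclen k} f + integral {arclen k..arclen (Suc k)} f"
    using Suc.prems \<open>arclen k \<le> _\<close> arclen_nonneg[of k]
    by (intro Henstock_Kurzweil_Integration.integral_combine[symmetric]) auto
  ultimately show ?case using Suc.IH by simp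
qed (simp add: arclen_def)

lemma chain_integral_bound:
  fixes f :: "real \<Rightarrow> real"
  assumes "0 \<le> t" "continuous_on {0..t} f" "chain_path t \<in> \<Omega>" "0 \<le> \<delta>"
    and near: "\<And>s y. s \<in> {0..t} \<Longrightarrow> dist (chain_path s) y < r \<Longrightarrow> f s \<le> l y + \<delta>"
  shows "integral {0..t} f \<le> u x0 - u (chain_path t) + (\<eta> + \<delta>) * t + (l (chain_path t) + \<delta>) * r"
proof -
  have "t < total_len"
    using assms(3) chain_limit_notin by (auto simp: chain_path_def split: if_splits)
  define j where "j = seg_index t"
  have path_t: "chain_path t = chain j" using \<open>t < total_len\<close> by (simp add: chain_path_def j_def)
  have j: "arclen j \<le> t" "t < arclen (Suc j)"
    using arclen_seg_index_le[OF \<open>0 \<le> t\<close>] seg_index_less[OF \<open>t < total_len\<close>] by (auto simp: j_def)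
  have int: "f integrable_on {0..t}" using integrable_continuous_interval[OF assms(2)] .
  have "integral {arclen i..arclen (Suc i)} f \<le> (l (chain i) + \<delta>) * step_len i" if "i < j" for i
  proof -
    have "arclen (Suc i) \<le> arclen j" using that by (intro arclen_mono) simp
    then have "integral {arclen i..arclen (Suc i)} f \<le> (l (chain i) + \<delta>) * (arclen (Suc i) - arclen i)"
      using j \<open>t < total_len\<close> arclen_nonneg[of i] arclen_mono[of i "Suc i"]
      by (intro integral_along_segment_le integrable_on_subinterval[OF int] near) auto
    then show ?thesis by (simp add: arclen_Suc)
  qed
  then have "integral {0..arclen j} f \<le> (\<Sum>i<j. (l (chain i) + \<delta>) * step_len i)"
    using integral_arclen_eq_sum[of f j] integrable_on_subinterval[OF int, of 0 "arclen j"] j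
    by (auto intro!: sum_mono)
  also have "\<dots> = (\<Sum>i<j. (l (chain i) - \<eta>) * step_len i) + (\<eta> + \<delta>) * arclen j"
    by (simp add: arclen_def sum.distrib[symmetric] sum_distrib_left algebra_simps)
  also have "\<dots> \<le> u x0 - u (chain j) + (\<eta> + \<delta>) * t"
    using descent_sum_le[of j] mult_left_mono[OF j(1), of "\<eta> + \<delta>"] \<eta>_pos \<open>0 \<le> \<delta>\<close> by linarith
  finally have head: "integral {0..arclen j} f \<le> u x0 - u (chain j) + (\<eta> + \<delta>) * t" .
  have "integral {arclen j..t} f \<le> (l (chain j) + \<delta>) * (t - arclen j)"
    using j \<open>t < total_len\<close> arclen_nonneg[of j]
    by (intro integral_along_segment_le integrable_on_subinterval[OF int] near) auto
  also have "\<dots> \<le> (l (chain j) + \<delta>) * r"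
    using j step_len_less[of j] l_pos[of "chain j"] assms(3,4)
    by (intro mult_left_mono) (auto simp: path_t arclen_Suc)
  finally have tail: "integral {arclen j..t} f \<le> (l (chain j) + \<delta>) * r" .
  have "integral {0..t} f = integral {0..arclen j} f + integral {arclen j..t} f"
    using int j arclen_nonneg[of j] by (intro Henstock_Kurzweil_Integration.integral_combine[symmetric]) auto
  with head tail show ?thesis by (simp add: path_t)
qed

end

section \<open>Nearly optimal admissible curves\<close>

text \<open>
  The running-cost bound of \<open>chain_integral_bound\<close> for the approximating paths passes to their
  uniform limit \<open>\<gamma>\<close>, because within a fixed distance of \<open>\<gamma>\<close> the values of \<open>l\<close> change by less
  than \<open>\<delta>\<close>.
\<close>

lemma integral_le_along_limit_path_plus:
  fixes \<gamma> :: "real \<Rightarrow> 'a"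
  assumes x: "x \<in> \<Omega>" and \<eta>: "0 < \<eta>" "\<eta> < c" and \<rho>: "\<And>n. 0 < \<rho> n" "\<rho> \<longlonglongrightarrow> 0"
    and lim: "uniform_limit {0..t} (\<lambda>n. chain_path (\<rho> n) \<eta> x) \<gamma> sequentially"
    and "0 \<le> t" and \<gamma>: "continuous_on {0..t} \<gamma>" "\<gamma> ` {0..t} \<subseteq> \<Omega>" and "0 < \<delta>"
  shows "integral {0..t} (\<lambda>s. l (\<gamma> s)) \<le> u x - u (\<gamma> t) + (\<eta> + \<delta>) * t"
proof -
  let ?p = "\<lambda>n. chain_path (\<rho> n) \<eta> x"
  have "\<gamma> t \<in> \<Omega>" using \<gamma>(2) \<open>0 \<le> t\<close> by (simp add: image_subset_iff)
  have p_t: "(\<lambda>n. ?p n t) \<longlonglongrightarrow> \<gamma> t"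
    using tendsto_uniform_limitI[OF lim] \<open>0 \<le> t\<close> by simp
  obtain e where "0 < e" and e: "\<And>p y. p \<in> \<gamma> ` {0..t} \<Longrightarrow> dist y p < e \<Longrightarrow> y \<in> \<Omega> \<and> \<bar>l y - l p\<bar> < \<delta>"
    using compact_uniform_neighbourhood[OF compact_continuous_image[OF \<gamma>(1)] \<gamma>(2) open_domain continuous_l \<open>0 < \<delta>\<close>]
    by blast
  have "\<forall>\<^sub>F n in sequentially. \<forall>s\<in>{0..t}. dist (?p n s) (\<gamma> s) < e/2"
    using lim \<open>0 < e\<close> unfolding uniform_limit_iff by (meson half_gt_zero)
  moreover have "\<forall>\<^sub>F n in sequentially. \<rho> n < e/2"
    using \<open>0 < e\<close> by (intro order_tendstoD(2)[OF \<rho>(2)]) auto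
  moreover have "\<forall>\<^sub>F n in sequentially. ?p n t \<in> \<Omega>"
    using topological_tendstoD[OF p_t open_domain \<open>\<gamma> t \<in> \<Omega>\<close>] .
  ultimately have "\<forall>\<^sub>F n in sequentially.
      integral {0..t} (\<lambda>s. l (\<gamma> s)) \<le> u x - u (?p n t) + (\<eta> + \<delta>) * t + (l (?p n t) + \<delta>) * \<rho> n"
  proof eventually_elim
    case (elim n)
    have near: "l (\<gamma> s) \<le> l y + \<delta>" if s: "s \<in> {0..t}" and y: "dist (?p n s) y < \<rho> n" for s y
    proof -
      have "dist (?p n s) (\<gamma> s) < e/2" using elim(1) s by blast
      moreover have "dist y (\<gamma> s) \<le> dist (?p n s) y + dist (?p n s) (\<gamma> s)"
        using dist_triangle[of y "\<gamma> s" "?p n s"] by (simp add: dist_commute)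
      ultimately have "dist y (\<gamma> s) < e" using y elim(2) by linarith
      then show ?thesis using e[of "\<gamma> s" y] s by auto
    qed
    show ?case
      using continuous_on_compose2[OF continuous_l \<gamma>] elim \<open>0 < \<delta>\<close> \<open>0 \<le> t\<close>
      by (intro chain_integral_bound[OF \<rho>(1) \<eta> x] near) auto
  qed
  moreover have "(\<lambda>n. u x - u (?p n t) + (\<eta> + \<delta>) * t + (l (?p n t) + \<delta>) * \<rho> n)
      \<longlonglongrightarrow> u x - u (\<gamma> t) + (\<eta> + \<delta>) * t + (l (\<gamma> t) + \<delta>) * 0"
    using subsetD[OF closure_subset \<open>\<gamma> t \<in> \<Omega>\<close>] chain_path_in_closure[OF \<rho>(1) \<eta> x]
      topological_tendstoD[OF p_t open_domain \<open>\<gamma> t \<in> \<Omega>\<close>] \<open>\<gamma> t \<in> \<Omega>\<close>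
    by (intro tendsto_intros \<rho>(2) continuous_on_tendsto_compose[OF continuous_u p_t]
        continuous_on_tendsto_compose[OF continuous_l p_t]) auto
  ultimately show ?thesis
    by (intro tendsto_lowerbound[OF _ _ trivial_limit_sequentially]) auto
qed

lemma integral_le_along_limit_path:
  fixes \<gamma> :: "real \<Rightarrow> 'a"
  assumes x: "x \<in> \<Omega>" and \<eta>: "0 < \<eta>" "\<eta> < c" and \<rho>: "\<And>n. 0 < \<rho> n" "\<rho> \<longlonglongrightarrow> 0"
    and lim: "uniform_limit {0..t} (\<lambda>n. chain_path (\<rho> n) \<eta> x) \<gamma> sequentially"
    and "0 \<le> t" and \<gamma>: "continuous_on {0..t} \<gamma>" "\<gamma> ` {0..t} \<subseteq> \<Omega>"
  shows "integral {0..t} (\<lambda>s. l (\<gamma> s)) \<le> u x - u (\<gamma> t) + \<eta> * t"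
proof (rule field_le_epsilon)
  fix \<epsilon> :: real assume "0 < \<epsilon>"
  define \<delta> where "\<delta> = \<epsilon> / (t + 1)"
  have "0 < \<delta>" using \<open>0 < \<epsilon>\<close> \<open>0 \<le> t\<close> by (simp add: \<delta>_def)
  have "\<delta> * t \<le> \<epsilon>" using \<open>0 < \<epsilon>\<close> \<open>0 \<le> t\<close> by (simp add: \<delta>_def field_simps)
  then show "integral {0..t} (\<lambda>s. l (\<gamma> s)) \<le> u x - u (\<gamma> t) + \<eta> * t + \<epsilon>"
    using integral_le_along_limit_path_plus[OF assms \<open>0 < \<delta>\<close>] by (simp add: distrib_right)
qed

lemma limit_descent_path:
  assumes x: "x \<in> \<Omega>" and \<eta>: "0 < \<eta>" "\<eta> < c" and B: "(u x - u_inf) / (c - \<eta>) \<le> B"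
  obtains \<rho> \<gamma> where "\<And>n. 0 < \<rho> n" "\<rho> \<longlonglongrightarrow> 0" "1-lipschitz_on {0..} \<gamma>"
    "\<And>t. uniform_limit {0..t} (\<lambda>n. chain_path (\<rho> n) \<eta> x) \<gamma> sequentially"
    "\<gamma> 0 = x" "\<And>t. 0 \<le> t \<Longrightarrow> \<gamma> t \<in> closure \<Omega>" "\<gamma> B \<in> frontier \<Omega>"
proof -
  define \<rho>0 where "\<rho>0 n = inverse (real (Suc n))" for n
  have \<rho>0_pos: "0 < \<rho>0 n" for n by (simp add: \<rho>0_def)
  have "\<rho>0 \<longlonglongrightarrow> 0" unfolding \<rho>0_def by (rule LIMSEQ_inverse_real_of_nat)
  then obtain k \<gamma> where "strict_mono k" "1-lipschitz_on {0..} \<gamma>"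
    and unif: "\<And>t. uniform_limit {0..t} (\<lambda>n. chain_path (\<rho>0 (k n)) \<eta> x) \<gamma> sequentially"
    using asymptotically_lipschitz_limit[OF compact_universe, of \<rho>0 "\<lambda>n. chain_path (\<rho>0 n) \<eta> x"]
      chain_path_almost_lipschitz[OF \<rho>0_pos \<eta> x] by blast
  define \<rho> where "\<rho> = \<rho>0 \<circ> k"
  have lim: "(\<lambda>n. chain_path (\<rho> n) \<eta> x t) \<longlonglongrightarrow> \<gamma> t" if "0 \<le> t" for t
    using tendsto_uniform_limitI[OF unif[of t]] that by (simp add: \<rho>_def)
  show thesis
  proof (rule that)
    show "0 < \<rho> n" for n by (simp add: \<rho>_def \<rho>0_pos)
    show "1-lipschitz_on {0..} \<gamma>" by fact
    show "\<rho> \<longlonglongrightarrow> 0" unfolding \<rho>_def by (rule LIMSEQ_subseq_LIMSEQ[OF \<open>\<rho>0 \<longlonglongrightarrow> 0\<close> \<open>strict_mono k\<close>])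
    show "uniform_limit {0..t} (\<lambda>n. chain_path (\<rho> n) \<eta> x) \<gamma> sequentially" for t
      using unif by (simp add: \<rho>_def)
    show "\<gamma> 0 = x"
      using LIMSEQ_unique[OF lim[of 0]] chain_path_0[OF \<rho>0_pos \<eta> x] by (simp add: \<rho>_def)
    show "\<gamma> t \<in> closure \<Omega>" if "0 \<le> t" for t
      using closed_sequentially[OF closed_closure _ lim[OF that]] chain_path_in_closure[OF \<rho>0_pos \<eta> x]
      by (simp add: \<rho>_def)
    have "0 \<le> (u x - u_inf) / (c - \<eta>)"
      using u_inf_le[OF subsetD[OF closure_subset x]] \<eta> by simp
    then show "\<gamma> B \<in> frontier \<Omega>"
      using closed_sequentially[OF frontier_closed _ lim] chain_path_in_frontier[OF \<rho>0_pos \<eta> x B] B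
      by (simp add: \<rho>_def)
  qed
qed

lemma running_cost_le_along_limit_path:
  fixes \<gamma> :: "real \<Rightarrow> 'a"
  assumes x: "x \<in> \<Omega>" and \<eta>: "0 < \<eta>" "\<eta> < c" and \<rho>: "\<And>n. 0 < \<rho> n" "\<rho> \<longlonglongrightarrow> 0"
    and unif: "\<And>t. uniform_limit {0..t} (\<lambda>n. chain_path (\<rho> n) \<eta> x) \<gamma> sequentially"
    and lip: "1-lipschitz_on {0..T} \<gamma>" and "0 < T"
    and inside: "\<gamma> ` {0..<T} \<subseteq> \<Omega>" and "\<gamma> ` {0..T} \<subseteq> closure \<Omega>"
  shows "enn2ereal (\<integral>\<^sup>+ s. ennreal (l (\<gamma> s)) * indicator {0..T} s \<partial>lborel) \<le> ereal (u x - u (\<gamma> T) + \<eta> * T)"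
proof -
  have \<gamma>c: "continuous_on {0..T} \<gamma>" using lipschitz_on_continuous_on[OF lip] .
  have sub: "\<gamma> ` {0..t} \<subseteq> \<Omega>" if "t \<in> {0..<T}" for t
    using that by (intro subset_trans[OF _ inside] image_mono) auto
  have "continuous_on {0..T} (\<lambda>t. u x - u (\<gamma> t) + \<eta> * t)"
    using continuous_on_compose2[OF continuous_u \<gamma>c \<open>\<gamma> ` {0..T} \<subseteq> closure \<Omega>\<close>]
    by (intro continuous_intros)
  then show ?thesis
  proof (rule nn_integral_Icc_le_of_integral_le[OF \<open>0 < T\<close>, rotated 2])
    fix t assume t: "t \<in> {0..<T}"
    have "continuous_on {0..t} \<gamma>" by (rule continuous_on_subset[OF \<gamma>c]) (use t in auto)
    then show "continuous_on {0..t} (\<lambda>s. l (\<gamma> s))"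
      using continuous_on_compose2[OF continuous_l _ sub[OF t]] by blast
    show "0 \<le> l (\<gamma> t)" using sub[OF t] t l_pos by (simp add: image_subset_iff less_imp_le)
    show "integral {0..t} (\<lambda>s. l (\<gamma> s)) \<le> u x - u (\<gamma> t) + \<eta> * t"
      using t sub[OF t] \<open>continuous_on {0..t} \<gamma>\<close>
      by (intro integral_le_along_limit_path[OF x \<eta> \<rho> unif]) auto
  qed
qed

lemma exists_curve_cost_le:
  assumes x: "x \<in> \<Omega>" and "0 < \<epsilon>"
  obtains T \<gamma> where "(T, \<gamma>) \<in> admissible_curves \<Omega> x"
    "enn2ereal (\<integral>\<^sup>+ s. ennreal (l (\<gamma> s)) * indicator {0..T} s \<partial>lborel) + ereal (u (\<gamma> T))
       \<le> ereal (u x) + ereal \<epsilon>"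
proof -
  have "0 \<le> u x - u_inf" using u_inf_le[OF subsetD[OF closure_subset x]] by simp
  \<comment> \<open>For \<open>\<eta> \<le> c/2\<close> every descent chain from \<open>x\<close> is shorter than \<open>B\<close>, so the limit path is on
     the boundary at time \<open>B\<close>; the slack \<open>\<eta> T\<close> is then at most \<open>\<eta> B \<le> \<epsilon>\<close>.\<close>
  define B where "B = 2 * (u x - u_inf) / c + 1"
  have "0 < B" using \<open>0 \<le> u x - u_inf\<close> c_pos by (simp add: B_def add_nonneg_pos)
  define \<eta> where "\<eta> = min (c/2) (\<epsilon> / B)"
  have \<eta>: "0 < \<eta>" "\<eta> < c" using c_pos \<open>0 < \<epsilon>\<close> \<open>0 < B\<close> by (auto simp: \<eta>_def)
  have "\<eta> * B \<le> \<epsilon>" using \<open>0 < B\<close> by (simp add: \<eta>_def min_def field_simps)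
  have "\<eta> \<le> c/2" unfolding \<eta>_def by (rule min.cobounded1)
  then have "(u x - u_inf) / (c - \<eta>) \<le> (u x - u_inf) / (c/2)"
    using \<open>0 \<le> u x - u_inf\<close> \<eta> by (intro divide_left_mono) auto
  also have "\<dots> = 2 * (u x - u_inf) / c" by simp
  also have "\<dots> \<le> B" by (simp add: B_def)
  finally have len_le_B: "(u x - u_inf) / (c - \<eta>) \<le> B" .
  obtain \<rho> \<gamma> where \<rho>: "\<And>n. 0 < \<rho> n" "\<rho> \<longlonglongrightarrow> 0" and "1-lipschitz_on {0..} \<gamma>"
    and unif: "\<And>t. uniform_limit {0..t} (\<lambda>n. chain_path (\<rho> n) \<eta> x) \<gamma> sequentially"
    and "\<gamma> 0 = x" and in_closure: "\<And>t. 0 \<le> t \<Longrightarrow> \<gamma> t \<in> closure \<Omega>" and "\<gamma> B \<in> frontier \<Omega>"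
    using limit_descent_path[OF x \<eta> len_le_B] by blast
  have lip: "1-lipschitz_on {0..t} \<gamma>" for t
    using lipschitz_on_subset[OF \<open>1-lipschitz_on {0..} \<gamma>\<close>] by auto
  have \<gamma>_closure: "\<gamma> ` {0..t} \<subseteq> closure \<Omega>" for t using in_closure by (simp add: image_subset_iff)
  with \<open>0 < B\<close> \<open>\<gamma> 0 = x\<close> x obtain T where "0 < T" "T \<le> B" "\<gamma> T \<in> frontier \<Omega>"
    and inside: "\<gamma> ` {0..<T} \<subseteq> \<Omega>"
    using first_exit_time[OF open_domain _ lipschitz_on_continuous_on[OF lip] _ _ \<open>\<gamma> B \<in> frontier \<Omega>\<close>]
    by (metis less_imp_le)
  let ?N = "enn2ereal (\<integral>\<^sup>+ s. ennreal (l (\<gamma> s)) * indicator {0..T} s \<partial>lborel)"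
  have N_le: "?N \<le> ereal (u x - u (\<gamma> T) + \<eta> * T)"
    using \<gamma>_closure by (intro running_cost_le_along_limit_path[OF x \<eta> \<rho> unif lip \<open>0 < T\<close> inside])
  have "\<eta> * T \<le> \<epsilon>"
    using \<open>\<eta> * B \<le> \<epsilon>\<close> mult_left_mono[OF \<open>T \<le> B\<close>, of \<eta>] \<eta> by linarith
  with N_le have "?N + ereal (u (\<gamma> T)) \<le> ereal (u x) + ereal \<epsilon>"
    by (cases ?N) auto
  moreover have "(T, \<gamma>) \<in> admissible_curves \<Omega> x"
    using \<open>0 < T\<close> lip \<open>\<gamma> 0 = x\<close> \<open>\<gamma> T \<in> frontier \<Omega>\<close> inside \<gamma>_closure
    by (auto simp: admissible_curves_def)
  ultimately show thesis by (intro that)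
qed

lemma value_eq_INF_curve_cost:
  assumes x: "x \<in> \<Omega>" and boundary: "\<And>y. y \<in> frontier \<Omega> \<Longrightarrow> u y = g y"
  shows "ereal (u x) = (INF p\<in>admissible_curves \<Omega> x. curve_cost l g (fst p) (snd p))"
proof (rule antisym)
  show "ereal (u x) \<le> (INF p\<in>admissible_curves \<Omega> x. curve_cost l g (fst p) (snd p))"
  proof (rule INF_greatest, clarify)
    fix T \<gamma> assume "(T, \<gamma>) \<in> admissible_curves \<Omega> x"
    then have "0 < T" "1-lipschitz_on {0..T} \<gamma>" "\<gamma> ` {0..<T} \<subseteq> \<Omega>" "\<gamma> ` {0..T} \<subseteq> closure \<Omega>"
      "\<gamma> 0 = x" "\<gamma> T \<in> frontier \<Omega>"
      by (simp_all add: admissible_curves_def)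
    then show "ereal (u x) \<le> curve_cost l g (fst (T, \<gamma>)) (snd (T, \<gamma>))"
      using u_le_cost_along_curve[of T \<gamma>] boundary[of "\<gamma> T"] by (simp add: curve_cost_def)
  qed
  show "(INF p\<in>admissible_curves \<Omega> x. curve_cost l g (fst p) (snd p)) \<le> ereal (u x)"
  proof (rule ereal_le_epsilon2)
    fix \<epsilon> :: real assume "0 < \<epsilon>"
    then obtain T \<gamma> where adm: "(T, \<gamma>) \<in> admissible_curves \<Omega> x"
      and cost: "enn2ereal (\<integral>\<^sup>+ s. ennreal (l (\<gamma> s)) * indicator {0..T} s \<partial>lborel) + ereal (u (\<gamma> T))
        \<le> ereal (u x) + ereal \<epsilon>"
      using exists_curve_cost_le[OF x] by blast
    have "\<gamma> T \<in> frontier \<Omega>" using adm by (simp add: admissible_curves_def)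
    have "(INF p\<in>admissible_curves \<Omega> x. curve_cost l g (fst p) (snd p)) \<le> curve_cost l g T \<gamma>"
      using INF_lower[OF adm, of "\<lambda>p. curve_cost l g (fst p) (snd p)"] by simp
    also have "\<dots> \<le> ereal (u x) + ereal \<epsilon>"
      using cost boundary[OF \<open>\<gamma> T \<in> frontier \<Omega>\<close>] by (simp add: curve_cost_def)
    finally show "(INF p\<in>admissible_curves \<Omega> x. curve_cost l g (fst p) (snd p)) \<le> ereal (u x) + ereal \<epsilon>" .
  qed
qed

end

lemma cont_pointwise_solution_eq_INF_curve_cost:
  fixes \<Omega> :: "'a::metric_space set"
  assumes "compact (UNIV :: 'a set)" "open \<Omega>" "continuous_on \<Omega> l" "0 < c" "\<And>x. x \<in> \<Omega> \<Longrightarrow> c \<le> l x"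
    and "cont_pointwise_solution \<Omega> l g u" and "x \<in> \<Omega>"
  shows "ereal (u x) = (INF p\<in>admissible_curves \<Omega> x. curve_cost l g (fst p) (snd p))"
proof -
  interpret eikonal_solution \<Omega> l u c
    using assms by unfold_locales (auto simp: cont_pointwise_solution_def)
  show ?thesis
    using value_eq_INF_curve_cost[OF \<open>x \<in> \<Omega>\<close>] assms(6) by (simp add: cont_pointwise_solution_def)
qed

theorem corollary3p5:
  fixes \<Omega> :: "'a::metric_space set" and l g :: "'a \<Rightarrow> real"
  assumes "compact (UNIV :: 'a set)"
    and "open \<Omega>" and "\<Omega> \<noteq> {}"
    and "continuous_on \<Omega> l"
    and "\<exists>c>0. \<forall>x\<in>\<Omega>. c \<le> l x"
    and "continuous_on (frontier \<Omega>) g"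
  shows "(\<forall>u v. cont_pointwise_solution \<Omega> l g u \<and> cont_pointwise_solution \<Omega> l g v
            \<longrightarrow> (\<forall>x\<in>closure \<Omega>. u x = v x))
       \<and> (\<forall>u. cont_pointwise_solution \<Omega> l g u \<longrightarrow>
            (\<forall>x\<in>\<Omega>. ereal (u x) = (INF p\<in>admissible_curves \<Omega> x. curve_cost l g (fst p) (snd p))))"
proof -
  obtain c where c: "0 < c" "\<And>x. x \<in> \<Omega> \<Longrightarrow> c \<le> l x" using assms(5) by blast
  have formula: "ereal (u x) = (INF p\<in>admissible_curves \<Omega> x. curve_cost l g (fst p) (snd p))"
    if "cont_pointwise_solution \<Omega> l g u" "x \<in> \<Omega>" for u x
    using cont_pointwise_solution_eq_INF_curve_cost[OF assms(1,2,4) c that] .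
  have uniqueness: "u x = v x" if "cont_pointwise_solution \<Omega> l g u" "cont_pointwise_solution \<Omega> l g v"
    and "x \<in> closure \<Omega>" for u v x
  proof (cases "x \<in> \<Omega>")
    case True
    have "ereal (u x) = ereal (v x)"
      using formula[OF that(1) True] formula[OF that(2) True] by (rule trans[OF _ sym])
    then show ?thesis by simp
  next
    case False
    then have "x \<in> frontier \<Omega>" using \<open>x \<in> closure \<Omega>\<close> assms(2) by (simp add: frontier_def interior_open)
    then show ?thesis using that by (simp add: cont_pointwise_solution_def)
  qed
  show ?thesis
    using uniqueness formula by (intro conjI allI impI ballI) auto
qed

end
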